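(* Let $\bar\tau>0$, let $h$ be any delay kernel as in the context, with Laplace transform $H$, and let $\alpha,\beta\in\mathbb{R}$ with $\beta<\alpha-1$. Then the characteristic equation $$\Big(z+\tfrac{1}{\bar\tau}\Big)^4-\alpha\Big(z+\tfrac{1}{\bar\tau}\Big)^2\tfrac{1}{\bar\tau^2}H(z)^2+\tfrac{\beta}{\bar\tau^4}H(z)^4=0$$ has a positive real root; hence the equilibrium is unstable, regardless of the kernel $h$.
   Context: A delay kernel is either a probability density $h:[0,\infty)\to[0,\infty)$ with $\int_0^\infty h=1$ and finite mean $\tau=\int_0^\infty t\,h(t)\,dt>0$, or the Dirac measure $\delta(t-\tau)$, $\tau>0$. Its Laplace transform is $H(z)=\int_0^\infty h(t)e^{-zt}\,dt$ (for the Dirac measure, $H(z)=e^{-z\tau}$), defined for $\operatorname{Re} z\ge 0$. The displayed equation is the characteristic equation of the linearization at an equilibrium of two coupled Wilson–Cowan excitatory/inhibitory pairs with time constant $\bar\tau>0$ and distributed delays; $\alpha,\beta$ are real coefficients determined by coupling weights and sigmoid slopes. The equilibrium is called unstable if some root has positive real part. *)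

theory Defs
  imports "HOL-Analysis.Analysis"
begin

text \<open>A delay kernel: either a probability density on [0,inf) with finite positive
mean, or a Dirac mass at tau > 0.\<close>
datatype kernel = Density "real \<Rightarrow> real" | Dirac real

definition valid_kernel :: "kernel \<Rightarrow> bool" where
  "valid_kernel k = (case k of
      Density h \<Rightarrow> (\<forall>t\<ge>0. 0 \<le> h t) \<and> (h has_integral 1) {0..}
                  \<and> (\<lambda>t. t * h t) integrable_on {0..}
                  \<and> integral {0..} (\<lambda>t. t * h t) > 0
    | Dirac \<tau> \<Rightarrow> \<tau> > 0)"

text \<open>Laplace transform (meaningful for Re z >= 0).\<close>
definition kernel_LT :: "kernel \<Rightarrow> complex \<Rightarrow> complex" where
  "kernel_LT k z = (case k of
      Density h \<Rightarrow> integral {0..} (\<lambda>t. complex_of_real (h t) * exp (- z * complex_of_real t))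
    | Dirac \<tau> \<Rightarrow> exp (- z * complex_of_real \<tau>))"

definition char_fun :: "real \<Rightarrow> real \<Rightarrow> real \<Rightarrow> (complex \<Rightarrow> complex) \<Rightarrow> complex \<Rightarrow> complex" where
  "char_fun tb \<alpha> \<beta> H z =
     (z + 1 / of_real tb) ^ 4
     - of_real \<alpha> * (z + 1 / of_real tb) ^ 2 * (1 / of_real tb ^ 2) * H z ^ 2
     + of_real \<beta> / of_real tb ^ 4 * H z ^ 4"

end

theory Submission
  imports Defs
begin

text \<open>On the positive real axis the Laplace transform of any kernel is a continuous real
function \<open>g\<close> with \<open>g 0 = 1\<close> and \<open>\<bar>g\<bar> \<le> 1\<close>. There the characteristic function is real:
with \<open>u = (x + 1/\<tau>)\<^sup>2\<close> and \<open>s = (g x / \<tau>)\<^sup>2\<close> it equals \<open>u\<^sup>2 - \<alpha> u s + \<beta> s\<^sup>2\<close>. At \<open>x = 0\<close> this is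
\<open>(1 - \<alpha> + \<beta>) / \<tau>\<^sup>4 < 0\<close>, while for large \<open>x\<close> the term \<open>u\<^sup>2\<close> dominates because \<open>s\<close> stays
bounded. The intermediate value theorem yields a positive real root.\<close>

lemma quadratic_form_pos:
  fixes \<alpha> \<beta> s u :: real
  assumes s: "0 \<le> s" "s \<le> u" and u: "1 + (\<bar>\<alpha>\<bar> + \<bar>\<beta>\<bar>) * s \<le> u"
  shows "u^2 - \<alpha> * u * s + \<beta> * s^2 > 0"
proof -
  have "\<alpha> * u * s \<le> \<bar>\<alpha>\<bar> * u * s"
    using s by (intro mult_right_mono) (auto simp: abs_mult)
  moreover have "- (\<bar>\<beta>\<bar> * u * s) \<le> \<beta> * s^2"
  proof -
    have "\<bar>\<beta>\<bar> * s * s \<le> \<bar>\<beta>\<bar> * u * s" using s by (intro mult_right_mono mult_left_mono) auto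
    moreover have "- (\<bar>\<beta>\<bar> * s * s) \<le> \<beta> * s^2" by (simp add: power2_eq_square abs_if)
    ultimately show ?thesis by linarith
  qed
  moreover have "1 \<le> u"
    using s u by (smt (verit) abs_ge_zero mult_nonneg_nonneg)
  then have "u \<le> u * (u - (\<bar>\<alpha>\<bar> + \<bar>\<beta>\<bar>) * s)"
    using u by (simp add: mult_le_cancel_left1)
  ultimately show ?thesis using \<open>1 \<le> u\<close>
    by (simp add: algebra_simps power2_eq_square)
qed

lemma char_fun_of_real:
  assumes "H (complex_of_real x) = complex_of_real y"
  shows "char_fun tb \<alpha> \<beta> H (complex_of_real x)
       = complex_of_real (((x + 1/tb)^2)^2 - \<alpha> * (x + 1/tb)^2 * (y/tb)^2 + \<beta> * ((y/tb)^2)^2)"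
  using assms by (simp add: char_fun_def power_divide field_simps flip: power_mult)

lemma char_fun_real_root:
  fixes tb \<alpha> \<beta> :: real and g :: "real \<Rightarrow> real"
  assumes tb: "tb > 0" and \<alpha>\<beta>: "\<beta> < \<alpha> - 1" and g_cont: "continuous_on {0..} g"
    and g0: "g 0 = 1" and g_bound: "\<And>x. x \<ge> 0 \<Longrightarrow> \<bar>g x\<bar> \<le> 1"
    and H_g: "\<And>x. x \<ge> 0 \<Longrightarrow> H (complex_of_real x) = complex_of_real (g x)"
  shows "\<exists>x>0. char_fun tb \<alpha> \<beta> H (complex_of_real x) = 0"
proof -
  define u where "u x = (x + 1/tb)^2" for x
  define s where "s x = (g x / tb)^2" for x
  define F where "F x = (u x)^2 - \<alpha> * u x * s x + \<beta> * (s x)^2" for x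
  have F0: "F 0 < 0"
  proof -
    have "F 0 = (1/tb)^4 * (1 - \<alpha> + \<beta>)"
      by (simp add: F_def u_def s_def g0 algebra_simps flip: power_mult)
    then show ?thesis using tb \<alpha>\<beta> by (simp add: mult_pos_neg)
  qed
  define X where "X = 1 + (\<bar>\<alpha>\<bar> + \<bar>\<beta>\<bar>) * (1/tb)^2"
  have X1: "X \<ge> 1" by (simp add: X_def)
  have s_bound: "0 \<le> s X" "s X \<le> (1/tb)^2"
    using g_bound[of X] X1 tb
    by (auto simp: s_def power_divide abs_square_le_1 divide_right_mono)
  have "X + 1/tb \<ge> 1" using X1 tb by (smt (verit) divide_pos_pos)
  then have X_le_u: "X + 1/tb \<le> u X"
    unfolding u_def power2_eq_square by (simp add: mult_le_cancel_left1)
  have c2_le_u: "(1/tb)^2 \<le> u X"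
    unfolding u_def using X1 tb by (intro power_mono) auto
  have "F X > 0"
    unfolding F_def
  proof (rule quadratic_form_pos)
    show "0 \<le> s X" "s X \<le> u X" using s_bound c2_le_u by auto
    have "(\<bar>\<alpha>\<bar> + \<bar>\<beta>\<bar>) * s X \<le> (\<bar>\<alpha>\<bar> + \<bar>\<beta>\<bar>) * (1/tb)^2"
      using s_bound by (intro mult_left_mono) auto
    then show "1 + (\<bar>\<alpha>\<bar> + \<bar>\<beta>\<bar>) * s X \<le> u X"
      using X_le_u tb unfolding X_def by (smt (verit) divide_pos_pos)
  qed
  moreover have "continuous_on {0..X} F"
    unfolding F_def u_def s_def using tb
    by (intro continuous_intros continuous_on_subset[OF g_cont]) auto
  ultimately obtain x where x: "0 \<le> x" "x \<le> X" "F x = 0"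
    using IVT'[of F 0 0 X] F0 X1 by auto
  with F0 have "x > 0" by (cases "x = 0") auto
  moreover have "char_fun tb \<alpha> \<beta> H (complex_of_real x) = complex_of_real (F x)"
    using char_fun_of_real[where H = H, OF H_g[OF \<open>0 \<le> x\<close>]] by (simp add: F_def u_def s_def)
  ultimately show ?thesis using x by auto
qed

lemma abs_exp_neg_diff_le:
  fixes a b :: real
  assumes "0 \<le> a" "0 \<le> b"
  shows "\<bar>exp (-a) - exp (-b)\<bar> \<le> \<bar>a - b\<bar>"
proof -
  have *: "exp (-a) - exp (-b) \<le> b - a" if "0 \<le> a" "a \<le> b" for a b :: real
  proof -
    have "exp (-a) - exp (-b) = exp (-a) * (1 - exp (a - b))"
      by (simp add: algebra_simps flip: exp_add)
    also have "\<dots> \<le> 1 - exp (a - b)"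
      using that by (intro mult_left_le_one_le) auto
    also have "\<dots> \<le> b - a"
      using exp_ge_add_one_self[of "a - b"] by linarith
    finally show ?thesis .
  qed
  show ?thesis
    using *[of a b] *[of b a] assms by (cases "a \<le> b") (auto simp: abs_if)
qed

definition real_laplace :: "(real \<Rightarrow> real) \<Rightarrow> real \<Rightarrow> real" where
  "real_laplace h x = integral {0..} (\<lambda>t. exp (- x * t) * h t)"

context
  fixes h :: "real \<Rightarrow> real"
  assumes h_nonneg: "\<And>t. t \<ge> 0 \<Longrightarrow> 0 \<le> h t" and h_integral: "(h has_integral 1) {0..}"
begin

lemma real_laplace_integrable:
  assumes "x \<ge> 0"
  shows "(\<lambda>t. exp (- x * t) * h t) integrable_on {0..}"
proof -
  have "(\<lambda>t. exp (- x * t)) \<in> borel_measurable (lebesgue_on {0..})"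
    by (intro continuous_imp_measurable_on_sets_lebesgue continuous_intros) auto
  moreover have "bounded ((\<lambda>t. exp (- x * t)) ` {0..})"
    unfolding bounded_iff using assms by (intro exI[of _ 1]) auto
  moreover have "h absolutely_integrable_on {0..}"
    using h_integral h_nonneg by (intro nonnegative_absolutely_integrable_1) auto
  ultimately have "(\<lambda>t. exp (- x * t) * h t) absolutely_integrable_on {0..}"
    by (intro absolutely_integrable_bounded_measurable_product_real) auto
  then show ?thesis
    by (rule set_lebesgue_integral_eq_integral(1))
qed

lemma real_laplace_0: "real_laplace h 0 = 1"
  using h_integral by (simp add: real_laplace_def integral_unique)

lemma abs_real_laplace_le_1:
  assumes x: "x \<ge> 0"
  shows "\<bar>real_laplace h x\<bar> \<le> 1"
proof -
  have "0 \<le> real_laplace h x"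
    unfolding real_laplace_def using h_nonneg
    by (intro integral_nonneg[OF real_laplace_integrable[OF x]]) auto
  moreover have "real_laplace h x \<le> integral {0..} h"
    unfolding real_laplace_def
  proof (rule integral_le[OF real_laplace_integrable[OF x]])
    show "h integrable_on {0..}" using h_integral by blast
    fix t :: real assume "t \<in> {0..}"
    then show "exp (- x * t) * h t \<le> h t"
      using x h_nonneg by (intro mult_left_le_one_le) auto
  qed
  ultimately show ?thesis using h_integral by (simp add: integral_unique)
qed

text \<open>The finite first moment yields continuity through a Lipschitz bound, with no need for
dominated convergence.\<close>
lemma real_laplace_lipschitz:
  assumes moment: "(\<lambda>t. t * h t) integrable_on {0..}"
  shows "(integral {0..} (\<lambda>t. t * h t))-lipschitz_on {0..} (real_laplace h)"
proof (rule lipschitz_onI)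
  show "0 \<le> integral {0..} (\<lambda>t. t * h t)"
    using h_nonneg by (intro integral_nonneg[OF moment]) auto
  fix x y :: real assume "x \<in> {0..}" "y \<in> {0..}"
  then have x: "x \<ge> 0" and y: "y \<ge> 0" by auto
  have "real_laplace h x - real_laplace h y
      = integral {0..} (\<lambda>t. exp (- x * t) * h t - exp (- y * t) * h t)"
    unfolding real_laplace_def
    using integral_diff[OF real_laplace_integrable[OF x] real_laplace_integrable[OF y]] by simp
  also have "norm \<dots> \<le> integral {0..} (\<lambda>t. dist x y * (t * h t))"
  proof (rule integral_norm_bound_integral)
    show "(\<lambda>t. exp (- x * t) * h t - exp (- y * t) * h t) integrable_on {0..}"
      using integrable_diff[OF real_laplace_integrable[OF x] real_laplace_integrable[OF y]] .
    show "(\<lambda>t. dist x y * (t * h t)) integrable_on {0..}"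
      using integrable_on_cmult_left[OF moment] by simp
    fix t :: real assume "t \<in> {0..}"
    then have t: "t \<ge> 0" by simp
    have "\<bar>exp (- (x * t)) - exp (- (y * t))\<bar> \<le> \<bar>x * t - y * t\<bar>"
      using t x y by (intro abs_exp_neg_diff_le) auto
    also have "\<dots> = dist x y * t"
      using t by (simp add: dist_real_def abs_mult flip: left_diff_distrib)
    finally have "\<bar>exp (- (x * t)) - exp (- (y * t))\<bar> * h t \<le> dist x y * t * h t"
      using h_nonneg[OF t] by (rule mult_right_mono)
    then show "norm (exp (- x * t) * h t - exp (- y * t) * h t) \<le> dist x y * (t * h t)"
      using h_nonneg[OF t] by (simp add: abs_mult flip: left_diff_distrib)
  qed
  finally show "dist (real_laplace h x) (real_laplace h y)
      \<le> integral {0..} (\<lambda>t. t * h t) * dist x y"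
    by (simp add: dist_real_def mult.commute)
qed

lemma kernel_LT_Density_of_real:
  assumes x: "x \<ge> 0"
  shows "kernel_LT (Density h) (complex_of_real x) = complex_of_real (real_laplace h x)"
proof -
  have "((\<lambda>t. complex_of_real (exp (- x * t) * h t)) has_integral
         complex_of_real (real_laplace h x)) {0..}"
    unfolding real_laplace_def
    by (intro has_integral_of_real integrable_integral real_laplace_integrable[OF x])
  then show ?thesis
    by (simp add: kernel_LT_def exp_of_real integral_unique mult.commute
        flip: of_real_mult of_real_minus)
qed

end

lemma kernel_LT_on_nonneg_reals:
  assumes "valid_kernel k"
  obtains g where "continuous_on {0..} g" "g 0 = 1" "\<And>x. x \<ge> 0 \<Longrightarrow> \<bar>g x\<bar> \<le> 1"
    "\<And>x. x \<ge> 0 \<Longrightarrow> kernel_LT k (complex_of_real x) = complex_of_real (g x)"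
proof (cases k)
  case (Dirac \<tau>)
  with assms have "\<tau> > 0" by (simp add: valid_kernel_def)
  show ?thesis
  proof (rule that[of "\<lambda>x. exp (- x * \<tau>)"])
    show "continuous_on {0..} (\<lambda>x. exp (- x * \<tau>))"
      by (intro continuous_intros)
    fix x :: real assume "x \<ge> 0"
    then show "\<bar>exp (- x * \<tau>)\<bar> \<le> 1"
      using \<open>\<tau> > 0\<close> by simp
    show "kernel_LT k (complex_of_real x) = complex_of_real (exp (- x * \<tau>))"
      by (simp add: Dirac kernel_LT_def exp_of_real flip: of_real_mult of_real_minus)
  qed simp
next
  case (Density h)
  with assms have h: "\<And>t. t \<ge> 0 \<Longrightarrow> 0 \<le> h t" "(h has_integral 1) {0..}"
    and moment: "(\<lambda>t. t * h t) integrable_on {0..}"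
    by (auto simp: valid_kernel_def)
  show ?thesis
  proof (rule that[of "real_laplace h"])
    show "continuous_on {0..} (real_laplace h)"
      using lipschitz_on_continuous_on real_laplace_lipschitz[OF h moment] .
    show "real_laplace h 0 = 1"
      using real_laplace_0[OF h] .
    fix x :: real assume "x \<ge> 0"
    show "\<bar>real_laplace h x\<bar> \<le> 1"
      using abs_real_laplace_le_1[OF h \<open>x \<ge> 0\<close>] .
    show "kernel_LT k (complex_of_real x) = complex_of_real (real_laplace h x)"
      using kernel_LT_Density_of_real[OF h \<open>x \<ge> 0\<close>] unfolding Density .
  qed
qed

theorem theorem2:
  fixes tb \<alpha> \<beta> :: real and k :: kernel
  assumes "tb > 0" and "valid_kernel k" and "\<beta> < \<alpha> - 1"
  shows "\<exists>x::real. x > 0 \<and> char_fun tb \<alpha> \<beta> (kernel_LT k) (complex_of_real x) = 0"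
proof -
  obtain g where "continuous_on {0..} g" "g 0 = 1" "\<And>x. x \<ge> 0 \<Longrightarrow> \<bar>g x\<bar> \<le> 1"
    "\<And>x. x \<ge> 0 \<Longrightarrow> kernel_LT k (complex_of_real x) = complex_of_real (g x)"
    using kernel_LT_on_nonneg_reals[OF \<open>valid_kernel k\<close>] by blast
  from char_fun_real_root[OF \<open>tb > 0\<close> \<open>\<beta> < \<alpha> - 1\<close> this] show ?thesis .
qed

end
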